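(* Let $\Omega\subseteq\mathbb{R}^2$ be a bounded, simply connected domain of class $C^1$, let $a_1,\ldots,a_p$ be distinct points in $\Omega$, and let $\{L_1,\ldots,L_q\}$ be a minimal connection for $\{a_1,\ldots,a_p\}$ relative to $\Omega$. Then the segments $L_j$ are pairwise disjoint; for each index $i$ with $a_i\in\Omega$ there is exactly one index $j$ such that $a_i$ is an endpoint of $L_j$; and for each $j$ the intersection $L_j\cap\partial\Omega$ is either empty or an endpoint of $L_j$.
   Context: A connection for $\{a_1,\ldots,a_p\}$ relative to $\Omega$ is a finite collection $\{L_1,\ldots,L_q\}$ of closed non-degenerate straight line segments such that (i) each $L_j\subseteq\overline\Omega$; (ii) each $L_j$ either connects two of $a_1,\ldots,a_p$ or connects some $a_i$ with a point of $\partial\Omega$; (iii) each $a_i$ is an endpoint of an odd number of the $L_j$. A minimal connection relative to $\Omega$ is one minimising $\sum_j\mathcal{H}^1(L_j)$ among all connections relative to $\Omega$. *)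

theory Defs
  imports "HOL-Analysis.Analysis"
begin

text \<open>The plane R^2 is modelled by the type complex.\<close>

text \<open>Bounded C^1 domain: open set whose boundary is locally (after a rigid
rotation/translation) the graph of a C^1 function, with the set lying below the graph.\<close>
definition C1_domain :: "complex set \<Rightarrow> bool" where
  "C1_domain \<Omega> \<longleftrightarrow> open \<Omega> \<and> connected \<Omega> \<and>
     (\<forall>p \<in> frontier \<Omega>. \<exists>u r g. cmod u = 1 \<and> r > 0 \<and> g C1_differentiable_on UNIV \<and>
        (\<forall>z. cmod (z - p) < r \<longrightarrow>
           (z \<in> \<Omega> \<longleftrightarrow> Im (u * (z - p)) < g (Re (u * (z - p))))))"

definition seg_endpoint :: "complex \<Rightarrow> complex set \<Rightarrow> bool" where
  "seg_endpoint x S \<longleftrightarrow> (\<exists>y. y \<noteq> x \<and> S = closed_segment x y)"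

definition is_connection :: "complex set \<Rightarrow> complex set \<Rightarrow> complex set set \<Rightarrow> bool" where
  "is_connection \<Omega> A C \<longleftrightarrow> finite C \<and>
     (\<forall>L \<in> C. \<exists>x y. x \<noteq> y \<and> L = closed_segment x y \<and> L \<subseteq> closure \<Omega> \<and>
        x \<in> A \<and> (y \<in> A \<or> y \<in> frontier \<Omega>)) \<and>
     (\<forall>a \<in> A. odd (card {L \<in> C. seg_endpoint a L}))"

text \<open>The H^1 measure of a segment is its length, i.e. its diameter.\<close>
definition connection_length :: "complex set set \<Rightarrow> real" where
  "connection_length C = (\<Sum>L\<in>C. diameter L)"

definition is_minimal_connection :: "complex set \<Rightarrow> complex set \<Rightarrow> complex set set \<Rightarrow> bool" where
  "is_minimal_connection \<Omega> A C \<longleftrightarrow> is_connection \<Omega> A C \<and>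
     (\<forall>C'. is_connection \<Omega> A C' \<longrightarrow> connection_length C \<le> connection_length C')"

end

(*
  A minimal connection is tested against an exchange principle: removing some of its segments
  and adding admissible segments with the same endpoint parities at every point of A yields
  again a connection, so the removed segments are no longer than the added ones.  Two points
  of A or of the frontier can be joined, parity-wise, at cost at most their distance: by the
  segment itself if it stays in the domain, and otherwise through their nearest frontier
  points.  Hence two segments [a,b], [c,d] of a minimal connection satisfy
  |a - b| + |c - d| <= |a - c| + |b - d|, and likewise with c and d exchanged.  A common point
  of the two segments then lies on all six segments joining a, b, c, d, so it is an endpoint
  of both.  For the same reason a point of A that is an endpoint of three segments would lie
  between any two of the other three endpoints, which is impossible.  Finally, a common
  endpoint on the frontier, or a frontier point inside a segment, would be a boundary point
  where two discs contained in the domain touch from opposite sides, and a C^1 boundary does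
  not allow that.
*)
theory Submission
  imports Defs
begin

section \<open>Segments in the plane\<close>

lemma diameter_closed_segment:
  fixes a b :: "'a::euclidean_space"
  shows "diameter (closed_segment a b) = dist a b"
proof (rule antisym)
  show "diameter (closed_segment a b) \<le> dist a b"
  proof (rule diameter_le)
    fix u v assume u: "u \<in> closed_segment a b" and v: "v \<in> closed_segment a b"
    have "dist u v \<le> dist u a \<or> dist u v \<le> dist u b"
      using dist_decreases_closed_segment[OF v] .
    moreover have "dist u a \<le> dist a b \<and> dist u b \<le> dist a b"
      using dist_in_closed_segment[OF u] .
    ultimately show "norm (u - v) \<le> dist a b"
      by (auto simp: dist_norm)
  qed simp
  show "dist a b \<le> diameter (closed_segment a b)"
    by (rule diameter_bounded_bound) (auto simp: bounded_closed_segment)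
qed

lemma mem_closed_segment_iff_dist:
  fixes a b x :: "'a::euclidean_space"
  shows "x \<in> closed_segment a b \<longleftrightarrow> dist a b = dist a x + dist x b"
  by (metis between between_mem_segment)

lemma open_segment_opposite_directions:
  fixes x y z :: "'a::real_vector"
  assumes "z \<in> open_segment x y"
  obtains \<mu> where "\<mu> > 0" "y - z = (- \<mu>) *\<^sub>R (x - z)"
proof -
  obtain t where t: "0 < t" "t < 1" "z = (1 - t) *\<^sub>R x + t *\<^sub>R y"
    using assms by (auto simp: in_segment)
  have "x - z = t *\<^sub>R (x - y)"
    by (simp add: t(3) algebra_simps)
  then have "(- ((1 - t) / t)) *\<^sub>R (x - z) = (- ((1 - t) / t) * t) *\<^sub>R (x - y)"
    by simp
  also have "\<dots> = (1 - t) *\<^sub>R (y - x)"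
    using t by (simp add: scaleR_diff_right flip: scaleR_minus_left) (simp add: algebra_simps)
  also have "\<dots> = y - z"
    by (simp add: t(3) algebra_simps)
  finally have "y - z = (- ((1 - t) / t)) *\<^sub>R (x - z)" ..
  then show ?thesis
    using t that[of "(1 - t) / t"] by simp
qed

lemma common_point_of_triangle_sides:
  fixes p x y w :: "'a::real_vector"
  assumes "p \<in> closed_segment x y" "p \<in> closed_segment x w" "p \<in> closed_segment y w"
  shows "p = x \<or> p = y \<or> p = w"
proof (rule ccontr)
  assume "\<not> (p = x \<or> p = y \<or> p = w)"
  then have "p \<in> open_segment x y" "p \<in> open_segment x w" "p \<in> open_segment y w" and "x \<noteq> p"
    using assms by (auto simp: open_segment_def)
  then obtain \<alpha> \<beta> \<gamma> where "\<alpha> > 0" "y - p = (- \<alpha>) *\<^sub>R (x - p)"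
    and "\<beta> > 0" "w - p = (- \<beta>) *\<^sub>R (x - p)"
    and "\<gamma> > 0" "w - p = (- \<gamma>) *\<^sub>R (y - p)"
    by (metis open_segment_opposite_directions)
  then have "(- \<beta>) *\<^sub>R (x - p) = (\<gamma> * \<alpha>) *\<^sub>R (x - p)"
    by simp
  then have "(\<beta> + \<gamma> * \<alpha>) *\<^sub>R (x - p) = 0"
    by (simp add: algebra_simps)
  moreover have "\<beta> + \<gamma> * \<alpha> > 0"
    using \<open>\<alpha> > 0\<close> \<open>\<beta> > 0\<close> \<open>\<gamma> > 0\<close> by (simp add: add_pos_pos)
  ultimately show False
    using \<open>x \<noteq> p\<close> by simp
qed

lemma seg_endpoint_closed_segment_iff:
  fixes a b x :: complex
  assumes "a \<noteq> b"
  shows "seg_endpoint x (closed_segment a b) \<longleftrightarrow> x = a \<or> x = b"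
  using assms unfolding seg_endpoint_def
  by (auto simp: doubleton_eq_iff)

lemma ball_subset_if_frontier_far:
  fixes S :: "'a::real_normed_vector set"
  assumes "a \<in> S" and far: "\<And>q. q \<in> frontier S \<Longrightarrow> \<rho> \<le> dist a q"
  shows "ball a \<rho> \<subseteq> S"
proof (rule ccontr)
  assume "\<not> ball a \<rho> \<subseteq> S"
  then have "\<rho> > 0"
    by (metis ball_eq_empty empty_subsetI not_less)
  with \<open>a \<in> S\<close> have "ball a \<rho> \<inter> S \<noteq> {}"
    by (metis centre_in_ball disjoint_iff)
  with \<open>\<not> ball a \<rho> \<subseteq> S\<close> obtain q where "q \<in> ball a \<rho>" "q \<in> frontier S"
    using connected_Int_frontier[OF connected_ball] by blast
  then show False
    using far by fastforce
qed

section \<open>Toggling elements of a finite set\<close>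

definition toggle :: "'a \<Rightarrow> 'a set \<Rightarrow> 'a set" where
  "toggle x S = (if x \<in> S then S - {x} else insert x S)"

lemma finite_toggle [simp]: "finite (toggle x S) \<longleftrightarrow> finite S"
  by (simp add: toggle_def)

lemma toggle_subset: "toggle x S \<subseteq> insert x S"
  by (auto simp: toggle_def)

lemma odd_card_toggle:
  assumes "finite S"
  shows "odd (card {y \<in> toggle x S. P y}) \<longleftrightarrow> odd (card {y \<in> S. P y}) \<noteq> P x"
proof (cases "x \<in> S")
  case True
  then have "{y \<in> toggle x S. P y} = {y \<in> S. P y} - {x}"
    by (auto simp: toggle_def)
  with True assms show ?thesis
    by (cases "P x") (auto simp: card_Diff_singleton_if)
next
  case False
  then have "{y \<in> toggle x S. P y} = (if P x then insert x {y \<in> S. P y} else {y \<in> S. P y})"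
    by (auto simp: toggle_def)
  with False assms show ?thesis
    by auto
qed

lemma sum_toggle_le:
  fixes f :: "'a \<Rightarrow> real"
  assumes "finite S" "f x \<ge> 0"
  shows "sum f (toggle x S) \<le> sum f S + f x"
  using assms by (auto simp: toggle_def sum_diff1)

lemma finite_foldr_toggle: "finite S \<Longrightarrow> finite (foldr toggle xs S)"
  by (induction xs) auto

lemma foldr_toggle_subset: "foldr toggle xs S \<subseteq> S \<union> set xs"
  by (induction xs) (use toggle_subset in fastforce)+

lemma odd_card_foldr_toggle:
  assumes "finite S"
  shows "odd (card {y \<in> foldr toggle xs S. P y})
    \<longleftrightarrow> odd (card {y \<in> S. P y}) \<noteq> odd (length (filter P xs))"
  by (induction xs) (auto simp: odd_card_toggle finite_foldr_toggle assms)

lemma sum_foldr_toggle_le: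
  fixes f :: "'a \<Rightarrow> real"
  assumes "finite S" "\<forall>x \<in> set xs. f x \<ge> 0"
  shows "sum f (foldr toggle xs S) \<le> sum f S + (\<Sum>x\<leftarrow>xs. f x)"
  using assms(2)
proof (induction xs)
  case (Cons x xs)
  then show ?case
    using sum_toggle_le[OF finite_foldr_toggle[OF assms(1)], of f x xs] by auto
qed simp

lemma card_Collect_split_list:
  assumes "finite S" "set xs \<subseteq> S" "distinct xs"
  shows "card {y \<in> S. P y} = card {y \<in> S - set xs. P y} + length (filter P xs)"
proof -
  have "{y \<in> S. P y} = {y \<in> S - set xs. P y} \<union> ({y. P y} \<inter> set xs)"
    using assms(2) by auto
  also have "card \<dots> = card {y \<in> S - set xs. P y} + card ({y. P y} \<inter> set xs)"
    by (rule card_Un_disjoint) (use assms(1) in auto)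
  finally show ?thesis
    using assms(3) by (simp add: distinct_length_filter)
qed

section \<open>Discs touching a \<open>C\<^sup>1\<close> boundary\<close>

lemma scaled_mem_ball_through_origin:
  fixes e w :: "'a::real_inner"
  assumes "t > 0" "t * (norm w)\<^sup>2 < 2 * inner e w"
  shows "t *\<^sub>R w \<in> ball e (norm e)"
proof -
  have "(norm (e - t *\<^sub>R w))\<^sup>2 = (norm e)\<^sup>2 - t * (2 * inner e w - t * (norm w)\<^sup>2)"
    using dot_norm_neg[of e "t *\<^sub>R w"] by (simp add: power_mult_distrib power2_eq_square algebra_simps)
  also have "\<dots> < (norm e)\<^sup>2"
    using assms by simp
  finally show ?thesis
    by (simp add: dist_norm power_less_imp_less_base)
qed

lemma eventually_below_line_at_right:
  fixes g :: "real \<Rightarrow> real"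
  assumes "(g has_real_derivative D) (at 0)" "g 0 \<le> 0" "a * D < c"
  shows "\<forall>\<^sub>F t in at_right 0. g (t * a) < t * c"
proof -
  have "((\<lambda>t. t * a) has_real_derivative a) (at 0)"
    by (auto intro!: derivative_eq_intros)
  moreover have "(g has_real_derivative D) (at (0 * a))"
    using assms(1) by simp
  ultimately have "((\<lambda>t. g (t * a)) has_real_derivative D * a) (at 0)"
    by (rule DERIV_chain')
  then have "((\<lambda>t. (g (t * a) - g 0) / t) \<longlongrightarrow> D * a) (at 0)"
    by (simp add: has_field_derivative_iff)
  then have "\<forall>\<^sub>F t in at 0. (g (t * a) - g 0) / t < c"
    using assms(3) by (intro order_tendstoD(2)) (auto simp: mult.commute)
  then have "\<forall>\<^sub>F t in at_right 0. (g (t * a) - g 0) / t < c"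
    by (simp add: eventually_at_split)
  then have "\<forall>\<^sub>F t in at_right 0. 0 < t \<and> (g (t * a) - g 0) / t < c"
    using eventually_at_right_less by (intro eventually_conj)
  then show ?thesis
    by eventually_elim (use assms(2) in \<open>auto simp: divide_less_eq mult.commute\<close>)
qed

lemma inscribed_disc_centre_below_graph:
  fixes g :: "real \<Rightarrow> real" and e :: complex
  assumes g: "g differentiable (at 0)" and "g 0 \<le> 0" and "r > 0" and "e \<noteq> 0"
    and disc: "\<And>\<zeta>. \<zeta> \<in> ball 0 r \<Longrightarrow> \<zeta> \<in> ball e (cmod e) \<Longrightarrow> Im \<zeta> < g (Re \<zeta>)"
  shows "Im e < 0"
proof (rule ccontr)
  \<comment> \<open>Otherwise the points \<open>t * (Re e + i (Im e + (\<bar>g' 0\<bar> + 1) \<bar>Re e\<bar>))\<close>, for small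
      \<open>t > 0\<close>, lie in both discs but above the graph of \<open>g\<close>.\<close>
  assume "\<not> Im e < 0"
  define a b where "a = Re e" and "b = Im e"
  have "b \<ge> 0"
    using \<open>\<not> Im e < 0\<close> by (simp add: b_def)
  have "a\<^sup>2 + b\<^sup>2 > 0"
    using \<open>e \<noteq> 0\<close> by (simp add: a_def b_def complex_eq_iff sum_power2_gt_zero_iff)
  obtain D where D: "(g has_real_derivative D) (at 0)"
    using g DERIV_deriv_iff_real_differentiable by blast
  define c where "c = b + (\<bar>D\<bar> + 1) * \<bar>a\<bar>"
  define w where "w = Complex a c"
  have "a * D < c"
  proof -
    have "a * D \<le> \<bar>D\<bar> * \<bar>a\<bar>"
      by (metis abs_ge_self abs_mult mult.commute)
    moreover have "b + \<bar>a\<bar> > 0"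
      using \<open>b \<ge> 0\<close> \<open>a\<^sup>2 + b\<^sup>2 > 0\<close> by (cases "a = 0") auto
    ultimately show ?thesis
      by (simp add: c_def algebra_simps)
  qed
  have "inner e w > 0"
  proof -
    have "b * b \<le> b * c"
      using \<open>b \<ge> 0\<close> by (intro mult_left_mono) (auto simp: c_def)
    then show ?thesis
      using \<open>a\<^sup>2 + b\<^sup>2 > 0\<close> by (simp add: inner_complex_def a_def b_def w_def power2_eq_square)
  qed
  have "\<forall>\<^sub>F t in at_right 0. 0 < t \<and> g (t * a) < t * c \<and> t * cmod w < r
      \<and> t * (cmod w)\<^sup>2 < 2 * inner e w"
  proof (intro eventually_conj)
    show "\<forall>\<^sub>F t in at_right 0. t * cmod w < r"
      by (rule order_tendstoD(2)[OF _ \<open>r > 0\<close>]) (auto intro!: tendsto_eq_intros)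
    show "\<forall>\<^sub>F t in at_right 0. t * (cmod w)\<^sup>2 < 2 * inner e w"
      by (rule order_tendstoD(2)) (use \<open>inner e w > 0\<close> in \<open>auto intro!: tendsto_eq_intros\<close>)
  qed (use eventually_at_right_less eventually_below_line_at_right[OF D \<open>g 0 \<le> 0\<close> \<open>a * D < c\<close>]
      in auto)
  then obtain t where t: "0 < t" "g (t * a) < t * c" "t * cmod w < r" "t * (cmod w)\<^sup>2 < 2 * inner e w"
    using eventually_happens'[OF trivial_limit_at_right_real] by blast
  have "t *\<^sub>R w \<in> ball 0 r"
    using t by simp
  moreover have "t *\<^sub>R w \<in> ball e (cmod e)"
    using scaled_mem_ball_through_origin t(1,4) by blast
  ultimately have "Im (t *\<^sub>R w) < g (Re (t *\<^sub>R w))"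
    by (rule disc)
  then show False
    using t(2) by (simp add: w_def mult.commute)
qed

text \<open>In local graph coordinates at \<open>z\<close> the centre of each ball lies strictly below the
  horizontal axis, but the two centres lie on opposite sides of \<open>z\<close>.\<close>
lemma C1_domain_no_two_sided_tangent_balls:
  assumes "C1_domain \<Omega>" "z \<in> frontier \<Omega>" "z \<in> open_segment x y"
    and "ball x (dist x z) \<subseteq> \<Omega>" "ball y (dist y z) \<subseteq> \<Omega>"
  shows False
proof -
  obtain u r g where u: "cmod u = 1" and "r > 0" and g: "g C1_differentiable_on UNIV"
    and local: "\<And>w. cmod (w - z) < r \<Longrightarrow> w \<in> \<Omega> \<longleftrightarrow> Im (u * (w - z)) < g (Re (u * (w - z)))"
    using assms(1,2) unfolding C1_domain_def by blast
  have "z \<notin> \<Omega>"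
    using assms(1,2) frontier_disjoint_eq unfolding C1_domain_def by blast
  then have "g 0 \<le> 0"
    using local[of z] \<open>r > 0\<close> by auto
  have "g differentiable (at 0)"
    using g by (simp add: C1_differentiable_on_eq)
  have "u * cnj u = 1"
    using u by (metis complex_norm_square of_real_1 power_one)
  have below: "Im (u * (v - z)) < 0" if "ball v (dist v z) \<subseteq> \<Omega>" "v \<noteq> z" for v
  proof (rule inscribed_disc_centre_below_graph)
    show "u * (v - z) \<noteq> 0"
      using u that(2) by auto
    fix \<zeta> assume "\<zeta> \<in> ball 0 r" "\<zeta> \<in> ball (u * (v - z)) (cmod (u * (v - z)))"
    define w where "w = z + cnj u * \<zeta>"
    have "u * (w - z) = \<zeta>"
      using \<open>u * cnj u = 1\<close> by (simp add: w_def mult.assoc[symmetric])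
    have "u * (v - w) = u * (v - z) - \<zeta>"
      using \<open>u * (w - z) = \<zeta>\<close> by (simp add: algebra_simps)
    then have "dist v w = dist (u * (v - z)) \<zeta>"
      using u by (metis dist_norm mult_1 norm_mult)
    then have "w \<in> \<Omega>"
      using that(1) \<open>\<zeta> \<in> ball (u * (v - z)) _\<close> u by (auto simp: norm_mult dist_norm)
    moreover have "cmod (w - z) < r"
      using \<open>\<zeta> \<in> ball 0 r\<close> u by (simp add: w_def norm_mult)
    ultimately show "Im \<zeta> < g (Re \<zeta>)"
      using local \<open>u * (w - z) = \<zeta>\<close> by metis
  qed fact+
  obtain \<mu> where "\<mu> > 0" "y - z = (- \<mu>) *\<^sub>R (x - z)"
    using open_segment_opposite_directions[OF assms(3)] by blast
  have "x \<noteq> z" "y \<noteq> z"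
    using assms(3) by (auto simp: open_segment_def)
  then have "Im (u * (x - z)) < 0" "Im (u * (y - z)) < 0"
    using below assms(4,5) by auto
  moreover have "u * (y - z) = (- \<mu>) *\<^sub>R (u * (x - z))"
    using \<open>y - z = _\<close> by simp
  then have "Im (u * (y - z)) = - \<mu> * Im (u * (x - z))"
    by simp
  moreover have "- \<mu> * Im (u * (x - z)) > 0"
    using \<open>\<mu> > 0\<close> \<open>Im (u * (x - z)) < 0\<close> by (intro mult_neg_neg) auto
  ultimately show False
    by linarith
qed

section \<open>Minimal connections\<close>

definition endpoint_parity :: "complex \<Rightarrow> complex set list \<Rightarrow> bool" where
  "endpoint_parity x Ns \<longleftrightarrow> odd (length (filter (seg_endpoint x) Ns))"

lemma endpoint_parity_Nil [simp]: "\<not> endpoint_parity x []"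
  by (simp add: endpoint_parity_def)

lemma endpoint_parity_Cons [simp]:
  "endpoint_parity x (N # Ns) \<longleftrightarrow> seg_endpoint x N \<noteq> endpoint_parity x Ns"
  by (simp add: endpoint_parity_def)

lemma endpoint_parity_append [simp]:
  "endpoint_parity x (Ns @ Ms) \<longleftrightarrow> endpoint_parity x Ns \<noteq> endpoint_parity x Ms"
  by (auto simp: endpoint_parity_def)

locale minimal_connection =
  fixes \<Omega> A :: "complex set" and C :: "complex set set"
  assumes bounded_domain: "bounded \<Omega>" and open_domain: "open \<Omega>"
    and sites_in_domain: "A \<subseteq> \<Omega>" and minimal: "is_minimal_connection \<Omega> A C"
begin

definition admissible_segment :: "complex set \<Rightarrow> bool" where
  "admissible_segment L \<longleftrightarrow> (\<exists>x y. x \<noteq> y \<and> L = closed_segment x y \<and> L \<subseteq> closure \<Omega> \<and>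
     x \<in> A \<and> (y \<in> A \<or> y \<in> frontier \<Omega>))"

lemma is_connection_iff:
  "is_connection \<Omega> A C' \<longleftrightarrow> finite C' \<and> (\<forall>L \<in> C'. admissible_segment L) \<and>
     (\<forall>a \<in> A. odd (card {L \<in> C'. seg_endpoint a L}))"
  by (simp add: is_connection_def admissible_segment_def)

lemma finite_connection: "finite C"
  and admissible_connection: "L \<in> C \<Longrightarrow> admissible_segment L"
  and odd_endpoint_count: "a \<in> A \<Longrightarrow> odd (card {L \<in> C. seg_endpoint a L})"
  using minimal by (auto simp: is_minimal_connection_def is_connection_iff)

lemma frontier_not_in_domain: "q \<in> frontier \<Omega> \<Longrightarrow> q \<notin> \<Omega>"
  using open_domain frontier_disjoint_eq by blast

lemma frontier_not_site: "q \<in> frontier \<Omega> \<Longrightarrow> q \<notin> A"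
  using frontier_not_in_domain sites_in_domain by blast

lemma diameter_admissible_segment_nonneg: "admissible_segment L \<Longrightarrow> diameter L \<ge> 0"
  by (auto simp: admissible_segment_def diameter_closed_segment)

lemma exchange_le:
  assumes "distinct Rs" "set Rs \<subseteq> C" "\<forall>N \<in> set Ns. admissible_segment N"
    and parity: "\<forall>x \<in> A. endpoint_parity x Rs \<longleftrightarrow> endpoint_parity x Ns"
  shows "(\<Sum>L\<leftarrow>Rs. diameter L) \<le> (\<Sum>N\<leftarrow>Ns. diameter N)"
proof -
  define C' where "C' = foldr toggle Ns (C - set Rs)"
  have finite_rest: "finite (C - set Rs)"
    using finite_connection by simp
  have split_count: "odd (card {L \<in> C. seg_endpoint x L})
      \<longleftrightarrow> odd (card {L \<in> C - set Rs. seg_endpoint x L}) \<noteq> endpoint_parity x Rs" for x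
    using card_Collect_split_list[OF finite_connection assms(2,1), of "seg_endpoint x"]
    by (simp add: endpoint_parity_def)
  have "is_connection \<Omega> A C'"
    unfolding is_connection_iff
  proof (intro conjI ballI)
    show "finite C'"
      by (simp add: C'_def finite_foldr_toggle finite_rest)
    show "admissible_segment L" if "L \<in> C'" for L
      using that foldr_toggle_subset[of Ns "C - set Rs"] admissible_connection assms(3)
      by (auto simp: C'_def)
    show "odd (card {L \<in> C'. seg_endpoint a L})" if "a \<in> A" for a
      using that odd_endpoint_count[OF that] split_count[of a] parity
      by (simp add: C'_def odd_card_foldr_toggle[OF finite_rest] endpoint_parity_def)
  qed
  then have "connection_length C \<le> connection_length C'"
    using minimal by (simp add: is_minimal_connection_def)
  also have "\<dots> \<le> connection_length (C - set Rs) + (\<Sum>N\<leftarrow>Ns. diameter N)"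
    unfolding connection_length_def C'_def
    using assms(3) diameter_admissible_segment_nonneg
    by (intro sum_foldr_toggle_le finite_rest) auto
  finally show ?thesis
    using finite_connection assms(1,2)
    by (simp add: connection_length_def sum.subset_diff[of "set Rs" C] sum_list_distinct_conv_sum_set)
qed

definition nearest_frontier :: "complex \<Rightarrow> complex" where
  "nearest_frontier a = (SOME w. w \<in> frontier \<Omega> \<and> (\<forall>q \<in> frontier \<Omega>. dist a w \<le> dist a q))"

lemma nearest_frontier:
  assumes "a \<in> \<Omega>"
  shows "nearest_frontier a \<in> frontier \<Omega>"
    and "\<And>q. q \<in> frontier \<Omega> \<Longrightarrow> dist a (nearest_frontier a) \<le> dist a q"
proof -
  have "\<Omega> \<noteq> UNIV"
    using bounded_domain not_bounded_UNIV by blast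
  with assms have "frontier \<Omega> \<noteq> {}"
    by (auto simp: frontier_eq_empty)
  then obtain w where "w \<in> frontier \<Omega>" "\<And>q. q \<in> frontier \<Omega> \<Longrightarrow> dist a w \<le> dist a q"
    using distance_attains_inf[OF frontier_closed] by metis
  then have "\<exists>w. w \<in> frontier \<Omega> \<and> (\<forall>q \<in> frontier \<Omega>. dist a w \<le> dist a q)"
    by blast
  from someI_ex[OF this] show "nearest_frontier a \<in> frontier \<Omega>"
    and "\<And>q. q \<in> frontier \<Omega> \<Longrightarrow> dist a (nearest_frontier a) \<le> dist a q"
    unfolding nearest_frontier_def by auto
qed

lemma ball_nearest_frontier_subset: "a \<in> \<Omega> \<Longrightarrow> ball a (dist a (nearest_frontier a)) \<subseteq> \<Omega>"
  by (intro ball_subset_if_frontier_far nearest_frontier(2))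

lemma nearest_frontier_neq:
  assumes "a \<in> \<Omega>"
  shows "nearest_frontier a \<noteq> a"
  using frontier_not_in_domain[OF nearest_frontier(1)[OF assms]] assms by auto

lemma admissible_segment_to_nearest_frontier:
  assumes "a \<in> A"
  shows "admissible_segment (closed_segment a (nearest_frontier a))"
proof -
  have "a \<in> \<Omega>"
    using assms sites_in_domain by blast
  have "closed_segment a (nearest_frontier a) \<subseteq> cball a (dist a (nearest_frontier a))"
    by (rule closed_segment_subset) auto
  also have "\<dots> = closure (ball a (dist a (nearest_frontier a)))"
    using nearest_frontier_neq[OF \<open>a \<in> \<Omega>\<close>] by simp
  also have "\<dots> \<subseteq> closure \<Omega>"
    using ball_nearest_frontier_subset[OF \<open>a \<in> \<Omega>\<close>] by (rule closure_mono)
  finally have "closed_segment a (nearest_frontier a) \<subseteq> closure \<Omega>" .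
  moreover have "a \<noteq> nearest_frontier a"
    using nearest_frontier_neq[OF \<open>a \<in> \<Omega>\<close>] by (rule not_sym)
  ultimately show ?thesis
    unfolding admissible_segment_def
    using assms nearest_frontier(1)[OF \<open>a \<in> \<Omega>\<close>] by blast
qed

text \<open>Frontier points carry no parity constraint, so nothing is needed to reach the
  frontier from them.\<close>
definition to_frontier :: "complex \<Rightarrow> complex set list" where
  "to_frontier w = (if w \<in> A then [closed_segment w (nearest_frontier w)] else [])"

lemma admissible_to_frontier: "N \<in> set (to_frontier w) \<Longrightarrow> admissible_segment N"
  by (auto simp: to_frontier_def admissible_segment_to_nearest_frontier split: if_splits)

lemma endpoint_parity_to_frontier:
  assumes "x \<in> A"
  shows "endpoint_parity x (to_frontier w) \<longleftrightarrow> x = w"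
proof (cases "w \<in> A")
  case True
  then have "w \<in> \<Omega>"
    using sites_in_domain by blast
  have "x \<noteq> nearest_frontier w"
    using frontier_not_site[OF nearest_frontier(1)[OF \<open>w \<in> \<Omega>\<close>]] assms by auto
  have "endpoint_parity x (to_frontier w) \<longleftrightarrow> seg_endpoint x (closed_segment w (nearest_frontier w))"
    using True by (simp add: to_frontier_def)
  also have "\<dots> \<longleftrightarrow> x = w \<or> x = nearest_frontier w"
    using nearest_frontier_neq[OF \<open>w \<in> \<Omega>\<close>] by (intro seg_endpoint_closed_segment_iff) simp
  finally show ?thesis
    using \<open>x \<noteq> nearest_frontier w\<close> by simp
next
  case False
  then show ?thesis
    using assms by (auto simp: to_frontier_def)
qed

lemma length_to_frontier:
  "(\<Sum>N\<leftarrow>to_frontier w. diameter N) = (if w \<in> A then dist w (nearest_frontier w) else 0)"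
  by (simp add: to_frontier_def diameter_closed_segment)

lemma length_to_frontier_le:
  assumes "q \<in> frontier \<Omega>"
  shows "(\<Sum>N\<leftarrow>to_frontier w. diameter N) \<le> dist w q"
proof (cases "w \<in> A")
  case True
  then have "w \<in> \<Omega>"
    using sites_in_domain by blast
  then show ?thesis
    using True nearest_frontier(2)[OF \<open>w \<in> \<Omega>\<close> assms] by (simp add: length_to_frontier)
qed (simp add: length_to_frontier)

lemma admissible_path:
  assumes "u \<in> A \<union> frontier \<Omega>" "v \<in> A \<union> frontier \<Omega>"
  obtains Ns where "\<forall>N \<in> set Ns. admissible_segment N"
    and "\<forall>x \<in> A. endpoint_parity x Ns \<longleftrightarrow> (x = u) \<noteq> (x = v)"
    and "(\<Sum>N\<leftarrow>Ns. diameter N) \<le> dist u v"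
proof (cases "closed_segment u v \<inter> frontier \<Omega> = {}")
  case True
  then have "u \<in> A" "v \<in> A"
    using assms by auto
  show ?thesis
  proof (cases "u = v")
    case True
    then show ?thesis
      using that[of "[]"] by simp
  next
    case False
    have "closed_segment u v \<subseteq> \<Omega>"
    proof (rule ccontr)
      assume "\<not> closed_segment u v \<subseteq> \<Omega>"
      then have "closed_segment u v - \<Omega> \<noteq> {}"
        by blast
      moreover have "closed_segment u v \<inter> \<Omega> \<noteq> {}"
        using \<open>u \<in> A\<close> sites_in_domain by auto
      ultimately have "closed_segment u v \<inter> frontier \<Omega> \<noteq> {}"
        using connected_Int_frontier[OF connected_segment] by metis
      with True show False
        by simp
    qed
    then have "admissible_segment (closed_segment u v)"
      unfolding admissible_segment_def using False \<open>u \<in> A\<close> \<open>v \<in> A\<close> closure_subset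
      by (intro exI[of _ u] exI[of _ v]) auto
    then show ?thesis
      using that[of "[closed_segment u v]"] False
      by (auto simp: seg_endpoint_closed_segment_iff diameter_closed_segment)
  qed
next
  case False
  then obtain q where q: "q \<in> closed_segment u v" "q \<in> frontier \<Omega>"
    by blast
  have "(\<Sum>N\<leftarrow>to_frontier u @ to_frontier v. diameter N) \<le> dist u q + dist v q"
    using length_to_frontier_le[OF q(2)] by (simp add: add_mono)
  also have "\<dots> = dist u v"
    using q(1) by (simp add: mem_closed_segment_iff_dist dist_commute)
  finally have "(\<Sum>N\<leftarrow>to_frontier u @ to_frontier v. diameter N) \<le> dist u v" .
  moreover have "\<forall>N \<in> set (to_frontier u @ to_frontier v). admissible_segment N"
    using admissible_to_frontier by auto
  moreover have "\<forall>x \<in> A. endpoint_parity x (to_frontier u @ to_frontier v) \<longleftrightarrow> (x = u) \<noteq> (x = v)"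
    by (simp add: endpoint_parity_to_frontier)
  ultimately show ?thesis
    using that by blast
qed

lemma connection_segmentE:
  assumes "L \<in> C"
  obtains a b where "L = closed_segment a b" "a \<noteq> b" "a \<in> A" "b \<in> A \<union> frontier \<Omega>"
  using admissible_connection[OF assms] unfolding admissible_segment_def by auto

lemma connection_segment_endpoints:
  assumes "L \<in> C" "L = closed_segment a b"
  shows "a \<noteq> b" "a \<in> A \<union> frontier \<Omega>" "b \<in> A \<union> frontier \<Omega>"
  using admissible_connection[OF assms(1)] assms(2)
  unfolding admissible_segment_def by (auto simp: doubleton_eq_iff)

lemma connection_segment_le_swap:
  assumes "L1 \<in> C" "L2 \<in> C" "L1 \<noteq> L2" "L1 = closed_segment a b" "L2 = closed_segment c d"
  shows "dist a b + dist c d \<le> dist a c + dist b d"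
proof -
  note ab = connection_segment_endpoints[OF assms(1,4)]
  note cd = connection_segment_endpoints[OF assms(2,5)]
  obtain N1 where N1: "\<forall>N \<in> set N1. admissible_segment N"
    "\<forall>x \<in> A. endpoint_parity x N1 \<longleftrightarrow> (x = a) \<noteq> (x = c)" "(\<Sum>N\<leftarrow>N1. diameter N) \<le> dist a c"
    using admissible_path[OF ab(2) cd(2)] by blast
  obtain N2 where N2: "\<forall>N \<in> set N2. admissible_segment N"
    "\<forall>x \<in> A. endpoint_parity x N2 \<longleftrightarrow> (x = b) \<noteq> (x = d)" "(\<Sum>N\<leftarrow>N2. diameter N) \<le> dist b d"
    using admissible_path[OF ab(3) cd(3)] by blast
  have "(\<Sum>L\<leftarrow>[L1, L2]. diameter L) \<le> (\<Sum>N\<leftarrow>N1 @ N2. diameter N)"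
  proof (rule exchange_le)
    show "\<forall>x \<in> A. endpoint_parity x [L1, L2] \<longleftrightarrow> endpoint_parity x (N1 @ N2)"
      using N1(2) N2(2) ab(1) cd(1) assms(4,5) by (auto simp: seg_endpoint_closed_segment_iff)
  qed (use assms N1 N2 in auto)
  then show ?thesis
    using N1(3) N2(3) assms(4,5) by (simp add: diameter_closed_segment)
qed

lemma connection_crossing_between_swapped_ends:
  assumes "L1 \<in> C" "L2 \<in> C" "L1 \<noteq> L2" "L1 = closed_segment a b" "L2 = closed_segment c d"
    and "p \<in> L1" "p \<in> L2"
  shows "p \<in> closed_segment a c" "p \<in> closed_segment b d"
proof -
  have "dist a b + dist c d \<le> dist a c + dist b d"
    using connection_segment_le_swap[OF assms(1-5)] .
  moreover have "dist a b = dist a p + dist p b" "dist c d = dist c p + dist p d"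
    using assms(4-7) by (simp_all add: mem_closed_segment_iff_dist)
  moreover have "dist a c \<le> dist a p + dist p c" "dist b d \<le> dist b p + dist p d"
    by (rule dist_triangle)+
  ultimately show "p \<in> closed_segment a c" "p \<in> closed_segment b d"
    by (simp_all add: mem_closed_segment_iff_dist dist_commute)
qed

lemma site_between_other_ends:
  assumes "closed_segment a b \<in> C" "closed_segment a b' \<in> C" "closed_segment a b \<noteq> closed_segment a b'"
  shows "a \<in> closed_segment b b'"
  using connection_crossing_between_swapped_ends(2)[OF assms refl refl] by simp

lemma no_three_segments_at_point:
  assumes "L1 \<in> C" "L2 \<in> C" "L3 \<in> C" "L1 \<noteq> L2" "L1 \<noteq> L3" "L2 \<noteq> L3"
    and "seg_endpoint a L1" "seg_endpoint a L2" "seg_endpoint a L3"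
  shows False
proof -
  obtain b1 b2 b3 where b: "b1 \<noteq> a" "L1 = closed_segment a b1" "b2 \<noteq> a" "L2 = closed_segment a b2"
    "b3 \<noteq> a" "L3 = closed_segment a b3"
    using assms(7-9) unfolding seg_endpoint_def by metis
  have "a \<in> closed_segment b1 b2" "a \<in> closed_segment b1 b3" "a \<in> closed_segment b2 b3"
    using assms(1-6) unfolding b(2,4,6) by (intro site_between_other_ends; simp)+
  then show False
    using common_point_of_triangle_sides b(1,3,5) by metis
qed

lemma unique_segment_at_site:
  assumes "a \<in> A"
  shows "\<exists>!L. L \<in> C \<and> seg_endpoint a L"
proof -
  let ?S = "{L \<in> C. seg_endpoint a L}"
  have "odd (card ?S)"
    using odd_endpoint_count[OF assms] .
  then obtain L0 where "L0 \<in> ?S"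
    by (metis all_not_in_conv card.empty odd_card_imp_not_empty)
  moreover have "L1 = L2" if "L1 \<in> ?S" "L2 \<in> ?S" for L1 L2
  proof (rule ccontr)
    assume "L1 \<noteq> L2"
    then have "card {L1, L2} = 2"
      by simp
    then have "?S \<noteq> {L1, L2}"
      using \<open>odd (card ?S)\<close> by auto
    then have "?S - {L1, L2} \<noteq> {}"
      using that by auto
    then obtain L3 where "L3 \<in> ?S" "L3 \<noteq> L1" "L3 \<noteq> L2"
      by blast
    then show False
      using no_three_segments_at_point[of L1 L2 L3 a] that \<open>L1 \<noteq> L2\<close> by auto
  qed
  ultimately show ?thesis
    by blast
qed

lemma connection_crossing_at_endpoints:
  assumes "L1 \<in> C" "L2 \<in> C" "L1 \<noteq> L2" "L1 = closed_segment a b" "L2 = closed_segment c d"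
    and "p \<in> L1" "p \<in> L2"
  shows "p = a \<or> p = b" "p = c \<or> p = d"
proof -
  have "a \<noteq> b" "c \<noteq> d"
    using connection_segment_endpoints(1) assms(1,2,4,5) by blast+
  have "L2 = closed_segment d c"
    using assms(5) by (simp add: closed_segment_commute)
  have pab: "p \<in> closed_segment a b" and pcd: "p \<in> closed_segment c d"
    using assms(4-7) by simp_all
  have pac: "p \<in> closed_segment a c" and pbd: "p \<in> closed_segment b d"
    using connection_crossing_between_swapped_ends[OF assms] .
  have pad: "p \<in> closed_segment a d" and pbc: "p \<in> closed_segment b c"
    using connection_crossing_between_swapped_ends[OF assms(1-4) \<open>L2 = closed_segment d c\<close> assms(6,7)] .
  have "p = a \<or> p = b \<or> p = c" "p = a \<or> p = b \<or> p = d"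
    "p = a \<or> p = c \<or> p = d" "p = b \<or> p = c \<or> p = d"
    using common_point_of_triangle_sides[OF pab pac pbc] common_point_of_triangle_sides[OF pab pad pbd]
      common_point_of_triangle_sides[OF pac pad pcd] common_point_of_triangle_sides[OF pbc pbd pcd] .
  then show "p = a \<or> p = b" "p = c \<or> p = d"
    using \<open>a \<noteq> b\<close> \<open>c \<noteq> d\<close> by auto
qed

lemma length_to_frontier_eq_if_connection_meets_frontier:
  assumes "L \<in> C" "L = closed_segment a b" "q \<in> L" "q \<in> frontier \<Omega>"
  shows "(\<Sum>N\<leftarrow>to_frontier a. diameter N) = dist a q"
proof -
  note ab = connection_segment_endpoints[OF assms(1,2)]
  have "(\<Sum>L\<leftarrow>[L]. diameter L) \<le> (\<Sum>N\<leftarrow>to_frontier a @ to_frontier b. diameter N)"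
  proof (rule exchange_le)
    show "\<forall>x \<in> A. endpoint_parity x [L] \<longleftrightarrow> endpoint_parity x (to_frontier a @ to_frontier b)"
      using ab(1) by (auto simp: assms(2) endpoint_parity_to_frontier seg_endpoint_closed_segment_iff)
  qed (use assms(1) admissible_to_frontier in auto)
  then have "dist a b \<le> (\<Sum>N\<leftarrow>to_frontier a. diameter N) + (\<Sum>N\<leftarrow>to_frontier b. diameter N)"
    using assms(2) by (simp add: diameter_closed_segment)
  moreover have "dist a b = dist a q + dist b q"
    using assms(2,3) by (simp add: mem_closed_segment_iff_dist dist_commute)
  ultimately show ?thesis
    using length_to_frontier_le[OF assms(4), of a] length_to_frontier_le[OF assms(4), of b]
    by linarith
qed

lemma ball_subset_if_connection_meets_frontier:
  assumes "L \<in> C" "L = closed_segment a b" "q \<in> L" "q \<in> frontier \<Omega>" "a \<in> A"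
  shows "ball a (dist a q) \<subseteq> \<Omega>"
proof -
  have "dist a q = dist a (nearest_frontier a)"
    using length_to_frontier_eq_if_connection_meets_frontier[OF assms(1-4)] assms(5) by (simp add: length_to_frontier)
  then show ?thesis
    using ball_nearest_frontier_subset assms(5) sites_in_domain by auto
qed

lemma connection_meets_frontier_at_endpoint:
  assumes "L \<in> C" "L = closed_segment a b" "q \<in> L" "q \<in> frontier \<Omega>" "a \<notin> A"
  shows "q = a"
  using length_to_frontier_eq_if_connection_meets_frontier[OF assms(1-4)] assms(5) by (simp add: length_to_frontier)

end

locale minimal_connection_C1 = minimal_connection +
  assumes C1_domain: "C1_domain \<Omega>"
begin

lemma connection_segments_disjoint:
  assumes "L1 \<in> C" "L2 \<in> C" "L1 \<noteq> L2"
  shows "L1 \<inter> L2 = {}"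
proof (rule ccontr)
  assume "L1 \<inter> L2 \<noteq> {}"
  then obtain p where "p \<in> L1" "p \<in> L2"
    by blast
  obtain a b where ab: "L1 = closed_segment a b" "a \<noteq> b" "a \<in> A" "b \<in> A \<union> frontier \<Omega>"
    using assms(1) by (rule connection_segmentE)
  obtain c d where cd: "L2 = closed_segment c d" "c \<noteq> d" "c \<in> A" "d \<in> A \<union> frontier \<Omega>"
    using assms(2) by (rule connection_segmentE)
  have "p = a \<or> p = b" "p = c \<or> p = d"
    using connection_crossing_at_endpoints[OF assms ab(1) cd(1) \<open>p \<in> L1\<close> \<open>p \<in> L2\<close>] .
  show False
  proof (cases "p \<in> A")
    case True
    have "seg_endpoint p L1" "seg_endpoint p L2"
      using \<open>p = a \<or> p = b\<close> \<open>p = c \<or> p = d\<close> ab(1,2) cd(1,2)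
      by (simp_all add: seg_endpoint_closed_segment_iff)
    then show False
      using unique_segment_at_site[OF True] assms by auto
  next
    case False
    then have "p = b" "p = d" "p \<in> frontier \<Omega>"
      using \<open>p = a \<or> p = b\<close> \<open>p = c \<or> p = d\<close> ab(3,4) cd(3) by auto
    have "ball a (dist a p) \<subseteq> \<Omega>" "ball c (dist c p) \<subseteq> \<Omega>"
      using ball_subset_if_connection_meets_frontier[OF assms(1) ab(1) \<open>p \<in> L1\<close> \<open>p \<in> frontier \<Omega>\<close> ab(3)]
        ball_subset_if_connection_meets_frontier[OF assms(2) cd(1) \<open>p \<in> L2\<close> \<open>p \<in> frontier \<Omega>\<close> cd(3)] .
    moreover have "p \<in> open_segment a c"
      using connection_crossing_between_swapped_ends(1)[OF assms ab(1) cd(1) \<open>p \<in> L1\<close> \<open>p \<in> L2\<close>]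
        False ab(3) cd(3) by (auto simp: open_segment_def)
    ultimately show False
      by (intro C1_domain_no_two_sided_tangent_balls[OF C1_domain \<open>p \<in> frontier \<Omega>\<close>])
  qed
qed

lemma connection_segment_frontier:
  assumes "L \<in> C"
  shows "L \<inter> frontier \<Omega> = {} \<or> (\<exists>e. seg_endpoint e L \<and> L \<inter> frontier \<Omega> = {e})"
proof -
  obtain x y where xy: "L = closed_segment x y" "x \<noteq> y" "x \<in> A" "y \<in> A \<union> frontier \<Omega>"
    using assms by (rule connection_segmentE)
  have "q = y" if "q \<in> L" "q \<in> frontier \<Omega>" for q
  proof (cases "y \<in> A")
    case True
    have "q \<noteq> x" "q \<noteq> y"
      using frontier_not_site[OF that(2)] xy(3) True by auto
    then have "q \<in> open_segment x y"
      using that(1) xy(1) by (simp add: open_segment_def)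
    moreover have "L = closed_segment y x"
      using xy(1) by (simp add: closed_segment_commute)
    then have "ball x (dist x q) \<subseteq> \<Omega>" "ball y (dist y q) \<subseteq> \<Omega>"
      using ball_subset_if_connection_meets_frontier[OF assms xy(1) that xy(3)]
        ball_subset_if_connection_meets_frontier[OF assms _ that True] by simp_all
    ultimately have False
      by (intro C1_domain_no_two_sided_tangent_balls[OF C1_domain that(2)])
    then show ?thesis ..
  next
    case False
    have "L = closed_segment y x"
      using xy(1) by (simp add: closed_segment_commute)
    then show ?thesis
      using connection_meets_frontier_at_endpoint[OF assms _ that False] by simp
  qed
  moreover have "seg_endpoint y L"
    using xy(1,2) by (simp add: seg_endpoint_closed_segment_iff)
  moreover have "y \<in> L"
    using xy(1) by simp
  ultimately show ?thesis
    by auto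
qed

end

theorem lemma1p6:
  fixes \<Omega> A :: "complex set" and C :: "complex set set"
  assumes "bounded \<Omega>" and "simply_connected \<Omega>" and "C1_domain \<Omega>"
    and "finite A" and "A \<subseteq> \<Omega>"
    and "is_minimal_connection \<Omega> A C"
  shows "(\<forall>L1 \<in> C. \<forall>L2 \<in> C. L1 \<noteq> L2 \<longrightarrow> L1 \<inter> L2 = {})
    \<and> (\<forall>a \<in> A. \<exists>!L. L \<in> C \<and> seg_endpoint a L)
    \<and> (\<forall>L \<in> C. L \<inter> frontier \<Omega> = {} \<or> (\<exists>e. seg_endpoint e L \<and> L \<inter> frontier \<Omega> = {e}))"
proof -
  interpret minimal_connection_C1 \<Omega> A C
    using assms by unfold_locales (auto simp: C1_domain_def)
  show ?thesis
    using connection_segments_disjoint unique_segment_at_site connection_segment_frontier by auto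
qed

end
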